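(* Define $\mathrm{Mex}(F)=\min(\mathbb{N}_0\setminus F)$ for $F\subseteq\mathbb{N}_0$, and $a+D=\{a+d:d\in D\}$. Define triples $v(n)=(v_1(n),v_2(n),v_3(n))$, $n\ge 0$, recursively by $v(0)=(0,0,0)$ and, for $n\ge 0$, with $F_n=\{v_i(k): 0\le k\le n,\ i\in\{1,2,3\}\}$ and $D_n=\bigcup_{k=0}^{n}\{v_2(k)-v_1(k),\,v_3(k)-v_2(k),\,v_3(k)-v_1(k)\}$, \[ v_1(n+1)=\mathrm{Mex}(F_n),\quad v_2(n+1)=\mathrm{Mex}\big((v_1(n+1)+D_n)\cup\{1,\dots,v_1(n+1)\}\cup F_n\big), \] \[ v_3(n+1)=\mathrm{Mex}\big((v_2(n+1)+D_n)\cup\{1,\dots,v_2(n+1)\}\cup F_n\big). \] For a finite set $K\subseteq\mathbb{N}_0$ let $\mathrm{Bl}(K)$ be the maximum length (number of elements) of a run of consecutive integers $m,m+1,\dots,m+j-1$ contained in $K$ (with $\mathrm{Bl}(\emptyset)=0$). Then for all $n\ge 0$: \[ \mathrm{Bl}\big(F_n\cap[\mathrm{Mex}(F_n),\,\mathrm{Mex}(F_n)+\mathrm{Mex}(D_n)-1]\big)\le 3, \] \[ v_1(n+1)-v_1(n)\in\{1,2,3,4\},\quad v_2(n+1)-v_2(n)\in\{2,3,\dots,8\},\quad v_3(n+1)-v_3(n)\in\{3,4,\dots,12\}, \] and for all $n\ge 1$, $\mathrm{Mex}(D_n)-\mathrm{Mex}(D_{n-1})\in\{1,2,3,4\}$.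
   Context: $\mathbb{N}_0$ denotes the nonnegative integers; $[a,b]$ denotes the integer interval $\{m\in\mathbb{Z}: a\le m\le b\}$. *)

theory Defs
  imports Main
begin

definition Mex :: "nat set \<Rightarrow> nat" where
  "Mex F = (LEAST m. m \<notin> F)"

definition shift :: "nat \<Rightarrow> nat set \<Rightarrow> nat set" where
  "shift a D = {a + d | d. d \<in> D}"

definition Fset :: "(nat \<times> nat \<times> nat) list \<Rightarrow> nat set" where
  "Fset hs = (\<Union>(a, b, c) \<in> set hs. {a, b, c})"

definition Dset :: "(nat \<times> nat \<times> nat) list \<Rightarrow> nat set" where
  "Dset hs = (\<Union>(a, b, c) \<in> set hs. {b - a, c - b, c - a})"

definition next_triple :: "(nat \<times> nat \<times> nat) list \<Rightarrow> nat \<times> nat \<times> nat" where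
  "next_triple hs =
     (let F = Fset hs; D = Dset hs;
          x1 = Mex F;
          x2 = Mex (shift x1 D \<union> {1..x1} \<union> F);
          x3 = Mex (shift x2 D \<union> {1..x2} \<union> F)
      in (x1, x2, x3))"

fun vhist :: "nat \<Rightarrow> (nat \<times> nat \<times> nat) list" where
  "vhist 0 = [(0, 0, 0)]"
| "vhist (Suc n) = vhist n @ [next_triple (vhist n)]"

definition v :: "nat \<Rightarrow> nat \<times> nat \<times> nat" where
  "v n = vhist n ! n"

definition v1 :: "nat \<Rightarrow> nat" where "v1 n = fst (v n)"
definition v2 :: "nat \<Rightarrow> nat" where "v2 n = fst (snd (v n))"
definition v3 :: "nat \<Rightarrow> nat" where "v3 n = snd (snd (v n))"

definition F :: "nat \<Rightarrow> nat set" where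
  "F n = (\<Union>k\<in>{0..n}. {v1 k, v2 k, v3 k})"

definition D :: "nat \<Rightarrow> nat set" where
  "D n = (\<Union>k\<in>{0..n}. {v2 k - v1 k, v3 k - v2 k, v3 k - v1 k})"

definition Bl :: "nat set \<Rightarrow> nat" where
  "Bl K = Max {j. \<exists>m. {m..<m + j} \<subseteq> K}"

end

theory Submission
  imports Defs
begin

(* Write f = Mex F_n and d = Mex D_n. By induction on n one maintains the invariant that
   D_n lies in [0, 2d - 2] and has no two consecutive elements >= d, while F_n lies in
   [0, f + 2d - 3] and its elements >= f + d - 1 are pairwise at distance >= 3. Under it the
   Mex computations collapse to v(n+1) = (f, f + d + s, f + 2d + s) with a slack s <= 2, and
   Mex D_{n+1} - d - s is 1 or 2. So v_2 grows by at least 2 and v_3 by at least 3 per step.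
   The elements of F_n beyond v_1(n) are values of v_2 or v_3, and a 2-separated set together
   with a 3-separated set never covers four consecutive integers: this bounds the runs in
   F_n above Mex F_n by 3 and gives Mex F_{n+1} <= Mex F_n + 4, whence the increment bounds. *)

lemma Mex_eqI:
  assumes "m \<notin> S" and "\<And>i. i < m \<Longrightarrow> i \<in> S"
  shows "Mex S = m"
  unfolding Mex_def using assms by (metis Least_equality leI)

lemma Mex_not_mem: "finite S \<Longrightarrow> Mex S \<notin> S"
  unfolding Mex_def by (metis LeastI_ex ex_new_if_finite infinite_UNIV_nat)

lemma mem_if_less_Mex: "i < Mex S \<Longrightarrow> i \<in> S"
  unfolding Mex_def using not_less_Least by blast

lemma Mex_le: "m \<notin> S \<Longrightarrow> Mex S \<le> m"
  unfolding Mex_def by (rule Least_le)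

lemma le_Mex:
  assumes "finite S" and "\<And>i. i < m \<Longrightarrow> i \<in> S"
  shows "m \<le> Mex S"
  using assms Mex_not_mem leI by blast

lemma Mex_less_Mex:
  assumes "A \<subseteq> B" and "Mex A \<in> B" and "finite B"
  shows "Mex A < Mex B"
proof -
  have "Suc (Mex A) \<le> Mex B"
    using assms by (intro le_Mex) (auto simp: less_Suc_eq dest: mem_if_less_Mex)
  then show ?thesis by simp
qed

lemma Mex_singleton_0: "Mex {0} = 1"
  by (rule Mex_eqI) auto

lemma finite_offsets:
  fixes A B :: "nat set"
  assumes "finite A" "finite B"
  shows "finite {j. a + j \<in> A \<or> b + j \<in> B}"
proof -
  have "{j. a + j \<in> A \<or> b + j \<in> B} = (+) a -` A \<union> (+) b -` B" by auto
  then show ?thesis using assms by (simp add: finite_vimageI)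
qed

lemma mem_shift: "x \<in> shift a A \<longleftrightarrow> a \<le> x \<and> x - a \<in> A"
  unfolding shift_def by force

lemma Mex_shift_Un:
  assumes "finite A" "finite B" "0 \<in> A" "0 \<in> B"
  shows "Mex (shift a B \<union> {1..a} \<union> A)
           = a + Mex B + Mex {j. a + Mex B + j \<in> A \<or> Mex B + j \<in> B}"
    (is "Mex ?S = a + ?d + Mex ?J")
proof (rule Mex_eqI)
  have "?d \<noteq> 0" using assms(4) Mex_not_mem[OF assms(2)] by metis
  moreover have "Mex ?J \<notin> ?J" by (rule Mex_not_mem[OF finite_offsets[OF assms(1,2)]])
  ultimately show "a + ?d + Mex ?J \<notin> ?S" by (auto simp: mem_shift)
next
  fix i assume i: "i < a + ?d + Mex ?J"
  consider "i = 0" | "1 \<le> i \<and> i \<le> a" | "a < i \<and> i < a + ?d" | "a + ?d \<le> i"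
    by linarith
  then show "i \<in> ?S"
  proof cases
    case 3
    then have "i - a \<in> B" by (intro mem_if_less_Mex) linarith
    then show ?thesis using 3 by (auto simp: mem_shift)
  next
    case 4
    then have "i - (a + ?d) \<in> ?J" using i by (intro mem_if_less_Mex) linarith
    then show ?thesis using 4 by (auto simp: mem_shift)
  qed (use assms(3) in auto)
qed

section \<open>Separated sets and runs\<close>

definition separated :: "nat \<Rightarrow> nat set \<Rightarrow> bool" where
  "separated c A \<longleftrightarrow> (\<forall>x\<in>A. \<forall>y\<in>A. x < y \<longrightarrow> x + c \<le> y)"

lemma separated_range:
  fixes g :: "nat \<Rightarrow> nat"
  assumes step: "\<And>n. g n + c \<le> g (Suc n)"
  shows "separated c (range g)"
  unfolding separated_def
proof (intro ballI impI)
  fix x y assume "x \<in> range g" "y \<in> range g" "x < y"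
  then obtain i j where ij: "x = g i" "y = g j" by blast
  have mono: "mono g" unfolding mono_iff_le_Suc using step le_add1 order_trans by blast
  have "i < j" using mono ij \<open>x < y\<close> by (metis leI monoD not_le)
  then have "g (Suc i) \<le> g j" using mono by (simp add: Suc_le_eq monoD)
  then show "x + c \<le> y" using step[of i] ij by linarith
qed

lemma separatedD: "separated c A \<Longrightarrow> x \<in> A \<Longrightarrow> y \<in> A \<Longrightarrow> x < y \<Longrightarrow> x + c \<le> y"
  unfolding separated_def by blast

lemma no_run_4:
  assumes A: "separated 2 A" and B: "separated 3 B"
  shows "\<not> {m..<m + 4} \<subseteq> A \<union> B"
proof
  assume covered: "{m..<m + 4} \<subseteq> A \<union> B"
  have run: "m + i \<in> A \<union> B" if "i < 4" for i using covered that by (auto simp: subset_iff)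
  have close_A: False if "x \<in> A" "y \<in> A" "x < y" "y < x + 2" for x y
    using separatedD[OF A that(1-3)] that(4) by linarith
  have close_B: False if "x \<in> B" "y \<in> B" "x < y" "y < x + 3" for x y
    using separatedD[OF B that(1-3)] that(4) by linarith
  consider "m + 1 \<in> A" "m + 2 \<in> B" | "m + 1 \<in> B" "m + 2 \<in> A"
    using run[of 1] run[of 2] close_A[of "m + 1" "m + 2"] close_B[of "m + 1" "m + 2"] by auto
  then show False
  proof cases
    case 1
    then show False using run[of 0] close_A[of m "m + 1"] close_B[of m "m + 2"] by auto
  next
    case 2
    then show False
      using run[of 3] close_A[of "m + 2" "m + 3"] close_B[of "m + 1" "m + 3"] by auto
  qed
qed

lemma Bl_le:
  assumes "\<And>m. \<not> {m..<m + Suc k} \<subseteq> K"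
  shows "Bl K \<le> k"
proof -
  have "j \<le> k" if "{m..<m + j} \<subseteq> K" for m j
  proof (rule ccontr)
    assume "\<not> j \<le> k"
    then have "{m..<m + Suc k} \<subseteq> {m..<m + j}" by auto
    then show False using assms that by blast
  qed
  then have runs: "{j. \<exists>m. {m..<m + j} \<subseteq> K} \<subseteq> {..k}" by blast
  have "0 \<in> {j. \<exists>m. {m..<m + j} \<subseteq> K}" by simp
  then show ?thesis unfolding Bl_def
    using finite_subset[OF runs finite_atMost] runs by (intro Max.boundedI) blast+
qed

lemma length_vhist: "length (vhist n) = Suc n"
  by (induction n) auto

lemma nth_vhist: "k \<le> n \<Longrightarrow> vhist n ! k = v k"
proof (induction n)
  case 0 then show ?case by (simp add: v_def)
next
  case (Suc n) then show ?case
    by (cases "k = Suc n") (simp_all add: v_def nth_append length_vhist)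
qed

lemma set_vhist: "set (vhist n) = v ` {0..n}"
  using nth_vhist length_vhist by (force simp: set_conv_nth less_Suc_eq_le)

lemma Fset_vhist: "Fset (vhist n) = F n"
  unfolding Fset_def F_def set_vhist by (auto simp: v1_def v2_def v3_def split: prod.splits)

lemma Dset_vhist: "Dset (vhist n) = D n"
  unfolding Dset_def D_def set_vhist by (auto simp: v1_def v2_def v3_def split: prod.splits)

lemma v_Suc: "v (Suc n) = next_triple (vhist n)"
  unfolding v_def by (simp add: nth_append length_vhist)

lemma v1_Suc: "v1 (Suc n) = Mex (F n)"
  by (simp add: v1_def v_Suc next_triple_def Let_def Fset_vhist)

lemma v2_Suc: "v2 (Suc n) = Mex (shift (v1 (Suc n)) (D n) \<union> {1..v1 (Suc n)} \<union> F n)"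
  by (simp add: v1_def v2_def v_Suc next_triple_def Let_def Fset_vhist Dset_vhist)

lemma v3_Suc: "v3 (Suc n) = Mex (shift (v2 (Suc n)) (D n) \<union> {1..v2 (Suc n)} \<union> F n)"
  by (simp add: v2_def v3_def v_Suc next_triple_def Let_def Fset_vhist Dset_vhist)

lemma v_0: "v1 0 = 0" "v2 0 = 0" "v3 0 = 0"
  by (simp_all add: v1_def v2_def v3_def v_def)

lemma F_0: "F 0 = {0}"
  by (simp add: F_def v_0)

lemma D_0: "D 0 = {0}"
  by (simp add: D_def v_0)

lemma F_Suc: "F (Suc n) = F n \<union> {v1 (Suc n), v2 (Suc n), v3 (Suc n)}"
  unfolding F_def by (auto simp: atLeast0_atMost_Suc)

lemma D_Suc:
  "D (Suc n) = D n \<union> {v2 (Suc n) - v1 (Suc n), v3 (Suc n) - v2 (Suc n), v3 (Suc n) - v1 (Suc n)}"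
  unfolding D_def by (auto simp: atLeast0_atMost_Suc)

lemma finite_F: "finite (F n)"
  by (simp add: F_def)

lemma finite_D: "finite (D n)"
  by (simp add: D_def)

lemma zero_mem_F: "0 \<in> F n"
  unfolding F_def using v_0 by force

lemma zero_mem_D: "0 \<in> D n"
  unfolding D_def using v_0 by force

lemma Mex_D_pos: "0 < Mex (D n)"
  using zero_mem_D Mex_not_mem[OF finite_D] by (metis gr0I)

lemma Mex_F_less_Mex_F_Suc: "Mex (F n) < Mex (F (Suc n))"
  by (rule Mex_less_Mex) (auto simp: F_Suc v1_Suc finite_F)

lemma strict_mono_v1: "strict_mono v1"
proof (rule strict_mono_Suc_iff[THEN iffD2], intro allI)
  fix n show "v1 n < v1 (Suc n)"
    using Mex_F_less_Mex_F_Suc by (cases n) (simp_all add: v1_Suc v_0 F_0 Mex_singleton_0)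
qed

lemma F_above_v1: "x \<in> F n \<Longrightarrow> v1 n < x \<Longrightarrow> x \<in> range v2 \<union> range v3"
  unfolding F_def using strict_mono_v1 by (auto dest: strict_mono_less_eq[THEN iffD2])

definition slack :: "nat \<Rightarrow> nat" where
  "slack n = Mex {j. Mex (F n) + Mex (D n) + j \<in> F n \<or> Mex (D n) + j \<in> D n}"

lemma v2_Suc_eq: "v2 (Suc n) = Mex (F n) + Mex (D n) + slack n"
  unfolding v2_Suc v1_Suc slack_def
  by (rule Mex_shift_Un) (simp_all add: finite_F finite_D zero_mem_F zero_mem_D)

lemma mem_if_less_slack:
  "j < slack n \<Longrightarrow> Mex (F n) + Mex (D n) + j \<in> F n \<or> Mex (D n) + j \<in> D n"
  unfolding slack_def using mem_if_less_Mex by blast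

lemma slack_0: "slack 0 = 0"
  unfolding slack_def F_0 D_0 Mex_singleton_0 by (rule Mex_eqI) auto

section \<open>An invariant of the recursion\<close>

definition mex_invariant :: "nat \<Rightarrow> bool" where
  "mex_invariant n \<longleftrightarrow>
     (\<forall>x\<in>D n. x + 2 \<le> 2 * Mex (D n)) \<and>
     (\<forall>x\<in>D n. Mex (D n) \<le> x \<longrightarrow> Suc x \<notin> D n) \<and>
     (\<forall>x\<in>F n. x + 3 \<le> Mex (F n) + 2 * Mex (D n)) \<and>
     separated 3 {x \<in> F n. Mex (F n) + Mex (D n) \<le> Suc x}"

lemma mex_invariant_0: "mex_invariant 0"
  unfolding mex_invariant_def separated_def F_0 D_0 Mex_singleton_0 by auto

context
  fixes n assumes inv: "mex_invariant n"
begin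

lemma D_bound: "x \<in> D n \<Longrightarrow> x + 2 \<le> 2 * Mex (D n)"
  using inv unfolding mex_invariant_def by blast

lemma Suc_not_mem_D: "x \<in> D n \<Longrightarrow> Mex (D n) \<le> x \<Longrightarrow> Suc x \<notin> D n"
  using inv unfolding mex_invariant_def by blast

lemma F_bound: "x \<in> F n \<Longrightarrow> x + 3 \<le> Mex (F n) + 2 * Mex (D n)"
  using inv unfolding mex_invariant_def by blast

lemma separated_F_tail: "separated 3 {x \<in> F n. Mex (F n) + Mex (D n) \<le> Suc x}"
  using inv unfolding mex_invariant_def by blast

lemma F_gap_if_slack_pos:
  assumes "0 < slack n" "0 < i" "i < 3"
  shows "Mex (F n) + Mex (D n) + i \<notin> F n"
proof
  assume "Mex (F n) + Mex (D n) + i \<in> F n"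
  moreover have "Mex (F n) + Mex (D n) \<in> F n"
    using mem_if_less_slack[OF assms(1)] Mex_not_mem[OF finite_D] by auto
  ultimately show False
    using separatedD[OF separated_F_tail, of "Mex (F n) + Mex (D n)" "Mex (F n) + Mex (D n) + i"]
      assms by auto
qed

lemma Mex_D_plus_1_mem_D: "1 < slack n \<Longrightarrow> Mex (D n) + 1 \<in> D n"
  using mem_if_less_slack[of 1 n] F_gap_if_slack_pos[of 1] by auto

lemma slack_le_2: "slack n \<le> 2"
proof (rule ccontr)
  assume "\<not> slack n \<le> 2"
  then have "Mex (D n) + 1 \<in> D n" "Mex (D n) + 2 \<in> D n"
    using Mex_D_plus_1_mem_D mem_if_less_slack[of 2 n] F_gap_if_slack_pos[of 2] by auto
  then show False using Suc_not_mem_D[of "Mex (D n) + 1"] by simp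
qed

lemma v3_Suc_eq: "v3 (Suc n) = Mex (F n) + 2 * Mex (D n) + slack n"
proof -
  let ?b = "v2 (Suc n)" and ?d = "Mex (D n)"
  have "v3 (Suc n) = ?b + ?d + Mex {j. ?b + ?d + j \<in> F n \<or> ?d + j \<in> D n}"
    unfolding v3_Suc
    by (rule Mex_shift_Un) (simp_all add: finite_F finite_D zero_mem_F zero_mem_D)
  also have "Mex {j. ?b + ?d + j \<in> F n \<or> ?d + j \<in> D n} = 0"
    using F_bound[of "?b + ?d"] Mex_not_mem[OF finite_D]
    by (intro Mex_eqI) (auto simp: v2_Suc_eq)
  finally show ?thesis by (simp add: v2_Suc_eq)
qed

lemma F_Suc_eq:
  "F (Suc n) = F n \<union>
     {Mex (F n), Mex (F n) + Mex (D n) + slack n, Mex (F n) + 2 * Mex (D n) + slack n}"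
  by (simp add: F_Suc v1_Suc v2_Suc_eq v3_Suc_eq)

lemma D_Suc_eq:
  "D (Suc n) = D n \<union> {Mex (D n), Mex (D n) + slack n, 2 * Mex (D n) + slack n}"
  by (auto simp: D_Suc v1_Suc v2_Suc_eq v3_Suc_eq)

lemma Mex_D_Suc_gt: "Mex (D n) + slack n < Mex (D (Suc n))"
proof -
  have "i \<in> D (Suc n)" if "i \<le> Mex (D n) + slack n" for i
  proof -
    have "i < Mex (D n) \<or> i = Mex (D n) \<or> i = Mex (D n) + slack n
        \<or> (i = Mex (D n) + 1 \<and> 1 < slack n)"
      using that slack_le_2 by arith
    then show ?thesis
      using mem_if_less_Mex[of i "D n"] Mex_D_plus_1_mem_D by (auto simp: D_Suc_eq)
  qed
  then show ?thesis using le_Mex[OF finite_D, of "Suc (Mex (D n) + slack n)" "Suc n"] by simp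
qed

lemma Mex_D_Suc_le: "Mex (D (Suc n)) \<le> Mex (D n) + slack n + 2"
proof -
  let ?d = "Mex (D n)" and ?s = "slack n"
  have "\<not> (?d + ?s + 1 \<in> D (Suc n) \<and> ?d + ?s + 2 \<in> D (Suc n))"
  proof
    assume both: "?d + ?s + 1 \<in> D (Suc n) \<and> ?d + ?s + 2 \<in> D (Suc n)"
    then have "?d + ?s + 1 \<in> D n \<or> ?d + ?s + 1 = 2 * ?d + ?s"
      and "?d + ?s + 2 \<in> D n \<or> ?d + ?s + 2 = 2 * ?d + ?s"
      by (auto simp: D_Suc_eq)
    then have "?d + ?s + 1 \<in> D n" "?d + ?s + 2 \<in> D n"
      using D_bound[of "?d + ?s + 1"] D_bound[of "?d + ?s + 2"] by auto
    then show False using Suc_not_mem_D[of "?d + ?s + 1"] by simp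
  qed
  then show ?thesis using Mex_le[of "?d + ?s + 1"] Mex_le[of "?d + ?s + 2"] by fastforce
qed

lemma mex_invariant_Suc: "mex_invariant (Suc n)"
proof -
  let ?f = "Mex (F n)" and ?d = "Mex (D n)" and ?s = "slack n"
  let ?f' = "Mex (F (Suc n))" and ?d' = "Mex (D (Suc n))"
  have f': "?f < ?f'" by (rule Mex_F_less_Mex_F_Suc)
  have d': "?d + ?s < ?d'" by (rule Mex_D_Suc_gt)
  have "0 < ?d" by (rule Mex_D_pos)
  \<comment> \<open>As f' > f and d' > d + s, of the new elements only 2d + s (in D) and
      f + 2d + s (in F) can lie above the thresholds, and every old element is far below them.\<close>
  have D1: "x + 2 \<le> 2 * ?d'" if "x \<in> D (Suc n)" for x
    using that d' D_bound[of x] by (auto simp: D_Suc_eq)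
  have D2: "Suc x \<notin> D (Suc n)" if "x \<in> D (Suc n)" "?d' \<le> x" for x
  proof
    assume "Suc x \<in> D (Suc n)"
    with that d' show False
      using D_bound[of x] D_bound[of "Suc x"] Suc_not_mem_D[of x] by (auto simp: D_Suc_eq)
  qed
  have F3: "x + 3 \<le> ?f' + 2 * ?d'" if "x \<in> F (Suc n)" for x
    using that f' d' F_bound[of x] \<open>0 < ?d\<close> by (auto simp: F_Suc_eq)
  have F4: "separated 3 {x \<in> F (Suc n). ?f' + ?d' \<le> Suc x}"
    unfolding separated_def
  proof (intro ballI impI)
    fix x y assume x: "x \<in> {x \<in> F (Suc n). ?f' + ?d' \<le> Suc x}"
      and y: "y \<in> {x \<in> F (Suc n). ?f' + ?d' \<le> Suc x}" and "x < y"
    then have "x \<in> F n \<or> x = ?f + 2 * ?d + ?s" "y \<in> F n \<or> y = ?f + 2 * ?d + ?s"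
      using f' d' by (auto simp: F_Suc_eq)
    then show "x + 3 \<le> y"
      using \<open>x < y\<close> x f' d' F_bound[of x] F_bound[of y]
        separatedD[OF separated_F_tail, of x y] by auto
  qed
  show ?thesis unfolding mex_invariant_def using D1 D2 F3 F4 by blast
qed

end

lemma mex_invariant: "mex_invariant n"
  by (induction n) (simp_all add: mex_invariant_0 mex_invariant_Suc)

lemma v2_Suc_ge: "v2 n + 2 \<le> v2 (Suc n)"
proof (cases n)
  case 0 then show ?thesis by (simp add: v2_Suc_eq v_0 F_0 D_0 Mex_singleton_0)
next
  case (Suc m) then show ?thesis
    using Mex_F_less_Mex_F_Suc[of m] Mex_D_Suc_gt[OF mex_invariant[of m]] by (simp add: v2_Suc_eq)
qed

lemma v3_Suc_ge: "v3 n + 3 \<le> v3 (Suc n)"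
proof (cases n)
  case 0 then show ?thesis by (simp add: v3_Suc_eq[OF mex_invariant] v_0 F_0 D_0 Mex_singleton_0)
next
  case (Suc m) then show ?thesis
    using Mex_F_less_Mex_F_Suc[of m] Mex_D_Suc_gt[OF mex_invariant[of m]]
    by (simp add: v3_Suc_eq[OF mex_invariant])
qed

lemma no_run_4_v23: "\<not> {m..<m + 4} \<subseteq> range v2 \<union> range v3"
  by (intro no_run_4 separated_range v2_Suc_ge v3_Suc_ge)

lemma Mex_F_Suc_le: "Mex (F (Suc n)) \<le> Mex (F n) + 4"
proof (rule ccontr)
  assume "\<not> ?thesis"
  then have "{Mex (F n) + 1..<Mex (F n) + 1 + 4} \<subseteq> F (Suc n)"
    using mem_if_less_Mex[of _ "F (Suc n)"] by auto
  then have "{Mex (F n) + 1..<Mex (F n) + 1 + 4} \<subseteq> range v2 \<union> range v3"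
    using F_above_v1[of _ "Suc n"] by (force simp: v1_Suc)
  then show False using no_run_4_v23 by blast
qed

lemma Bl_F_le_3: "Bl (F n \<inter> {Mex (F n) .. Mex (F n) + Mex (D n) - 1}) \<le> 3"
proof (rule Bl_le)
  fix m
  have "v1 n < Mex (F n)"
    using strict_mono_v1[THEN strict_monoD, of n "Suc n"] by (simp add: v1_Suc)
  then have "F n \<inter> {Mex (F n) .. Mex (F n) + Mex (D n) - 1} \<subseteq> range v2 \<union> range v3"
    using F_above_v1[of _ n] by fastforce
  then show "\<not> {m..<m + Suc 3} \<subseteq> F n \<inter> {Mex (F n) .. Mex (F n) + Mex (D n) - 1}"
    using no_run_4_v23[of m] by auto
qed

lemma v1_Suc_diff: "int (v1 (Suc n)) - int (v1 n) \<in> {1..4}"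
proof (cases n)
  case 0 then show ?thesis by (simp add: v1_Suc v_0 F_0 Mex_singleton_0)
next
  case (Suc m) then show ?thesis
    using Mex_F_less_Mex_F_Suc[of m] Mex_F_Suc_le[of m] by (simp add: v1_Suc)
qed

lemma v2_Suc_diff: "int (v2 (Suc n)) - int (v2 n) \<in> {2..8}"
proof (cases n)
  case 0 then show ?thesis by (simp add: v2_Suc_eq v_0 F_0 D_0 Mex_singleton_0 slack_0)
next
  case (Suc m) then show ?thesis
    using v2_Suc_ge[of n] Mex_F_Suc_le[of m] Mex_D_Suc_le[OF mex_invariant[of m]]
      slack_le_2[OF mex_invariant[of "Suc m"]]
    by (simp add: v2_Suc_eq)
qed

lemma v3_Suc_diff: "int (v3 (Suc n)) - int (v3 n) \<in> {3..12}"
proof (cases n)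
  case 0 then show ?thesis
    by (simp add: v3_Suc_eq[OF mex_invariant] v_0 F_0 D_0 Mex_singleton_0 slack_0)
next
  case (Suc m) then show ?thesis
    using v3_Suc_ge[of n] Mex_F_Suc_le[of m] Mex_D_Suc_le[OF mex_invariant[of m]]
      slack_le_2[OF mex_invariant[of m]] slack_le_2[OF mex_invariant[of "Suc m"]]
    by (simp add: v3_Suc_eq[OF mex_invariant])
qed

lemma Mex_D_Suc_diff: "int (Mex (D (Suc n))) - int (Mex (D n)) \<in> {1..4}"
  using Mex_D_Suc_gt[OF mex_invariant[of n]] Mex_D_Suc_le[OF mex_invariant[of n]]
    slack_le_2[OF mex_invariant[of n]]
  by auto

theorem theorem6:
  shows "(\<forall>n. Bl (F n \<inter> {Mex (F n) .. Mex (F n) + Mex (D n) - 1}) \<le> 3)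
       \<and> (\<forall>n. int (v1 (Suc n)) - int (v1 n) \<in> {1..4})
       \<and> (\<forall>n. int (v2 (Suc n)) - int (v2 n) \<in> {2..8})
       \<and> (\<forall>n. int (v3 (Suc n)) - int (v3 n) \<in> {3..12})
       \<and> (\<forall>n\<ge>1. int (Mex (D n)) - int (Mex (D (n - 1))) \<in> {1..4})"
proof -
  have "int (Mex (D n)) - int (Mex (D (n - 1))) \<in> {1..4}" if "n \<ge> 1" for n
    using that Mex_D_Suc_diff[of "n - 1"] by simp
  then show ?thesis using Bl_F_le_3 v1_Suc_diff v2_Suc_diff v3_Suc_diff by blast
qed

end
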